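(* Let $M\in\mathbb{R}^{N\times N}$ and let $\{1,\dots,N\}=\mathcal S\cup\mathcal S'$ be a partition into disjoint nonempty sets, with block decomposition $M=\begin{bmatrix} M_{\mathcal S} & M_{\mathcal S\mathcal S'}\\ M_{\mathcal S'\mathcal S} & M_{\mathcal S'}\end{bmatrix}$. Then for all integers $k\ge 1$, \[ \big\|[M^k]_{\mathcal S\mathcal S'}\big\|\le k\,\|M\|^{k-1}\,\|M_{\mathcal S\mathcal S'}\|. \]
   Context: $\|\cdot\|$ is the spectral norm; $[X]_{\mathcal S\mathcal S'}$ denotes the submatrix of $X$ with rows indexed by $\mathcal S$ and columns indexed by $\mathcal S'$. *)

theory Defs
  imports "HOL-Analysis.Analysis"
begin

definition spec_norm :: "real^'n^'m \<Rightarrow> real" where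
  "spec_norm A = onorm (\<lambda>x. A *v x)"

primrec mat_pow :: "real^'n^'n \<Rightarrow> nat \<Rightarrow> real^'n^'n" where
  "mat_pow A 0 = mat 1"
| "mat_pow A (Suc k) = A ** mat_pow A k"

text \<open>The block [A]_{S T}, realised as the matrix of the same size whose entries
outside rows S / columns T are zero (zero padding does not change the spectral norm).\<close>
definition block :: "real^'n^'m \<Rightarrow> 'm set \<Rightarrow> 'n set \<Rightarrow> real^'n^'m" where
  "block A S T = (\<chi> i j. if i \<in> S \<and> j \<in> T then A $ i $ j else 0)"

end

theory Submission
  imports Defs
begin

text \<open>The off-diagonal block of M^(k+1) = M M^k is M_S [M^k]_SS' + M_SS' [M^k]_S'.
A block has spectral norm at most that of the whole matrix, so the first term is bounded by
|M| times the bound for k and the second by |M_SS'| |M|^k: each induction step adds one copy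
of |M|^k |M_SS'|.\<close>

lemma spec_norm_nonneg: "0 \<le> spec_norm (A::real^'n^'m)"
  unfolding spec_norm_def by (rule onorm_pos_le[OF matrix_vector_mul_bounded_linear])

lemma spec_norm_matrix_mult_le:
  "spec_norm ((A::real^'n^'m) ** (B::real^'k^'n)) \<le> spec_norm A * spec_norm B"
proof -
  have "(\<lambda>x. (A ** B) *v x) = (\<lambda>x. A *v x) \<circ> (\<lambda>x. B *v x)"
    by (auto simp: matrix_vector_mul_assoc)
  then show ?thesis
    unfolding spec_norm_def
    using onorm_compose[OF matrix_vector_mul_bounded_linear matrix_vector_mul_bounded_linear]
    by metis
qed

lemma spec_norm_add_le: "spec_norm ((A::real^'n^'m) + B) \<le> spec_norm A + spec_norm B"
proof -
  have "(\<lambda>x. (A + B) *v x) = (\<lambda>x. A *v x + B *v x)"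
    by (auto simp: matrix_vector_mult_add_rdistrib)
  then show ?thesis
    unfolding spec_norm_def
    using onorm_triangle[OF matrix_vector_mul_bounded_linear matrix_vector_mul_bounded_linear]
    by metis
qed

lemma spec_norm_mat_1_le: "spec_norm (mat 1 :: real^'n^'n) \<le> 1"
  unfolding spec_norm_def by (rule onorm_le) simp

lemma spec_norm_mat_pow_le: "spec_norm (mat_pow (M::real^'n^'n) k) \<le> spec_norm M ^ k"
proof (induction k)
  case 0
  then show ?case using spec_norm_mat_1_le by simp
next
  case (Suc k)
  have "spec_norm (mat_pow M (Suc k)) \<le> spec_norm M * spec_norm (mat_pow M k)"
    using spec_norm_matrix_mult_le by simp
  also have "\<dots> \<le> spec_norm M * spec_norm M ^ k"
    by (rule mult_left_mono[OF Suc spec_norm_nonneg])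
  finally show ?case by simp
qed

lemma spec_norm_block_le: "spec_norm (block (A::real^'n^'m) S T) \<le> spec_norm A"
  unfolding spec_norm_def
proof (rule onorm_le)
  fix x :: "real^'n"
  define x\<^sub>T where "x\<^sub>T = (\<chi> j. if j \<in> T then x $ j else 0)"
  have "norm (block A S T *v x) \<le> norm (A *v x\<^sub>T)"
  proof (rule norm_le_componentwise_cart)
    fix i
    show "norm ((block A S T *v x) $ i) \<le> norm ((A *v x\<^sub>T) $ i)"
    proof (cases "i \<in> S")
      case True
      then have "(block A S T *v x) $ i = (A *v x\<^sub>T) $ i"
        by (auto simp: block_def matrix_vector_mult_def x\<^sub>T_def intro!: sum.cong)
      then show ?thesis by simp
    qed (simp add: block_def matrix_vector_mult_def)
  qed
  also have "\<dots> \<le> onorm (\<lambda>x. A *v x) * norm x\<^sub>T"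
    by (rule onorm[OF matrix_vector_mul_bounded_linear])
  also have "\<dots> \<le> onorm (\<lambda>x. A *v x) * norm x"
    by (intro mult_left_mono onorm_pos_le[OF matrix_vector_mul_bounded_linear]
        norm_le_componentwise_cart) (auto simp: x\<^sub>T_def)
  finally show "norm (block A S T *v x) \<le> onorm (\<lambda>x. A *v x) * norm x" .
qed

lemma block_matrix_mult_split:
  fixes A :: "real^'n^'m" and B :: "real^'p^'n"
  assumes "T \<union> T' = UNIV" and "T \<inter> T' = {}"
  shows "block (A ** B) R U = block A R T ** block B T U + block A R T' ** block B T' U"
proof -
  have "(\<Sum>l\<in>UNIV. A $ i $ l * B $ l $ j) =
        (\<Sum>l\<in>UNIV. if l \<in> T then A $ i $ l * B $ l $ j else 0) +
        (\<Sum>l\<in>UNIV. if l \<in> T' then A $ i $ l * B $ l $ j else 0)" for i j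
    unfolding sum.distrib[symmetric] by (intro sum.cong refl) (use assms in auto)
  then show ?thesis
    unfolding block_def matrix_matrix_mult_def
    by (auto simp: vec_eq_iff if_distrib[of "\<lambda>a. a * _"] cong: if_cong)
qed

lemma spec_norm_block_mat_pow_le:
  fixes M :: "real^'n^'n"
  assumes "S \<union> S' = UNIV" and "S \<inter> S' = {}"
  shows "spec_norm (block (mat_pow M k) S S')
           \<le> real k * spec_norm M ^ (k - 1) * spec_norm (block M S S')"
proof (induction k)
  case 0
  have "block (mat 1 :: real^'n^'n) S S' = 0"
    using assms by (auto simp: block_def vec_eq_iff mat_def)
  then show ?case
    by (simp add: spec_norm_def onorm_zero)
next
  case (Suc k)
  let ?n = "spec_norm M" and ?b = "spec_norm (block M S S')"
  have "spec_norm (block (mat_pow M (Suc k)) S S')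
     \<le> spec_norm (block M S S ** block (mat_pow M k) S S')
       + spec_norm (block M S S' ** block (mat_pow M k) S' S')"
    using block_matrix_mult_split[OF assms, of M "mat_pow M k"] spec_norm_add_le by simp
  also have "\<dots> \<le> ?n * (real k * ?n ^ (k - 1) * ?b) + ?b * ?n ^ k"
  proof (rule add_mono)
    show "spec_norm (block M S S ** block (mat_pow M k) S S') \<le> ?n * (real k * ?n ^ (k - 1) * ?b)"
      by (rule order_trans[OF spec_norm_matrix_mult_le])
        (intro mult_mono spec_norm_block_le Suc spec_norm_nonneg)
    have "spec_norm (block (mat_pow M k) S' S') \<le> ?n ^ k"
      using spec_norm_block_le spec_norm_mat_pow_le order_trans by blast
    then show "spec_norm (block M S S' ** block (mat_pow M k) S' S') \<le> ?b * ?n ^ k"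
      by (rule order_trans[OF spec_norm_matrix_mult_le mult_left_mono[OF _ spec_norm_nonneg]])
  qed
  also have "\<dots> = real (Suc k) * ?n ^ (Suc k - 1) * ?b"
    by (cases k) (auto simp: algebra_simps)
  finally show ?case .
qed

theorem lemma3:
  fixes M :: "real^'n^'n" and S S' :: "'n set" and k :: nat
  assumes "S \<union> S' = UNIV" and "S \<inter> S' = {}" and "S \<noteq> {}" and "S' \<noteq> {}"
    and "k \<ge> 1"
  shows "spec_norm (block (mat_pow M k) S S')
           \<le> real k * spec_norm M ^ (k - 1) * spec_norm (block M S S')"
  using spec_norm_block_mat_pow_le[OF assms(1,2)] .

end
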